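(* Let $\lambda\in[-1,1)$ and let $\gamma:I\to\mathbb{R}^d$ be a $\lambda$-eel. Then for every $t_1\in I$, the function $t\mapsto\|\gamma(t_1)-\gamma(t)\|+\lambda\,\ell(\gamma|_{[t_1,t]})$ is non-decreasing on $I\cap[t_1,\infty)$.
   Context: $\mathbb{R}^d$ carries the Euclidean inner product $\langle\cdot,\cdot\rangle$ and norm $\|\cdot\|$; $I\subset\mathbb{R}$ is an interval. A $\lambda$-eel is a continuous curve $\gamma:I\to\mathbb{R}^d$ with a nonzero right derivative $\gamma'(\tau)$ at each point such that for all $t<\tau$ in $I$: $\langle\gamma'(\tau),\gamma(t)-\gamma(\tau)\rangle\le\lambda\|\gamma'(\tau)\|\|\gamma(t)-\gamma(\tau)\|$. $\ell(\gamma|_{[t_1,t]})$ is the length of the restriction, $\sup\sum\|\gamma(s_i)-\gamma(s_{i+1})\|$ over finite increasing sequences in $[t_1,t]$. *)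

theory Defs
  imports "HOL-Analysis.Analysis"
begin

definition curve_length :: "(real \<Rightarrow> 'a::real_normed_vector) \<Rightarrow> real \<Rightarrow> real \<Rightarrow> ereal" where
  "curve_length \<gamma> a b =
     (SUP s \<in> {s :: real list. sorted_wrt (<) s \<and> set s \<subseteq> {a..b}}.
        ereal (\<Sum>i<length s - 1. norm (\<gamma> (s ! i) - \<gamma> (s ! Suc i))))"

definition is_eel :: "real \<Rightarrow> real set \<Rightarrow> (real \<Rightarrow> 'a::real_inner) \<Rightarrow> bool" where
  "is_eel lam I \<gamma> \<longleftrightarrow> is_interval I \<and> continuous_on I \<gamma> \<and>
     (\<exists>\<gamma>'. \<forall>\<tau>\<in>I. (\<gamma> has_vector_derivative \<gamma>' \<tau>) (at \<tau> within (I \<inter> {\<tau>..})) \<and> \<gamma>' \<tau> \<noteq> 0 \<and>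
        (\<forall>t\<in>I. t < \<tau> \<longrightarrow>
           inner (\<gamma>' \<tau>) (\<gamma> t - \<gamma> \<tau>) \<le> lam * norm (\<gamma>' \<tau>) * norm (\<gamma> t - \<gamma> \<tau>)))"

end

theory Submission
  imports Defs
begin

text \<open>Write \<open>F t = \<parallel>\<gamma> t\<^sub>1 - \<gamma> t\<parallel>\<close> and \<open>L t = \<ell>(\<gamma>|[t\<^sub>1,t])\<close>. At \<open>c \<ge> t\<^sub>1\<close> the right
  derivative \<open>v\<close> and the eel inequality give, to first order in \<open>h = y - c\<close>,
  \<open>F y \<ge> F c - \<lambda> h \<parallel>v\<parallel>\<close> and \<open>\<parallel>\<gamma> y - \<gamma> c\<parallel> \<approx> h \<parallel>v\<parallel>\<close>, hence
  \<open>F y + \<lambda> \<parallel>\<gamma> y - \<gamma> c\<parallel> \<ge> F c - o(h)\<close>.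
  For \<open>\<lambda> > 0\<close>, since \<open>L\<close> grows at least by the chord \<open>\<parallel>\<gamma> y - \<gamma> c\<parallel>\<close>, the function \<open>F + \<lambda> L\<close>
  has nonnegative lower right Dini derivatives and is upper semicontinuous from the left, so it
  is nondecreasing. For \<open>\<lambda> \<le> 0\<close> the same argument applied to the continuous function
  \<open>F + \<lambda> \<parallel>\<gamma> - \<gamma> a\<parallel>\<close> gives the chord inequality \<open>F a \<le> F b + \<lambda> \<parallel>\<gamma> b - \<gamma> a\<parallel>\<close>; for \<open>\<lambda> < 0\<close>
  it bounds every inscribed polygon over \<open>[a,b]\<close> by \<open>(F b - F a) / -\<lambda>\<close>, so \<open>L\<close> is finite and
  \<open>\<lambda> (L b - L a) \<ge> F a - F b\<close>.\<close>

section \<open>A Dini-type monotonicity criterion\<close>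

lemma real_induction:
  fixes P :: "real \<Rightarrow> bool"
  assumes "a \<le> b" and "P a"
    and left: "\<And>c. a < c \<Longrightarrow> c \<le> b \<Longrightarrow> (\<And>y. a \<le> y \<Longrightarrow> y < c \<Longrightarrow> P y) \<Longrightarrow> P c"
    and right: "\<And>c. a \<le> c \<Longrightarrow> c < b \<Longrightarrow> (\<And>y. a \<le> y \<Longrightarrow> y \<le> c \<Longrightarrow> P y) \<Longrightarrow>
      \<exists>z>c. \<forall>y. c < y \<and> y \<le> z \<longrightarrow> P y"
  shows "P b"
proof -
  define S where "S = {x. a \<le> x \<and> x \<le> b \<and> (\<forall>y. a \<le> y \<and> y \<le> x \<longrightarrow> P y)}"
  have aS: "a \<in> S" and bdd: "bdd_above S"
    using \<open>a \<le> b\<close> \<open>P a\<close> unfolding S_def bdd_above_def by (auto intro: antisym)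
  define c where "c = Sup S"
  have ac: "a \<le> c" unfolding c_def using aS bdd by (rule cSup_upper)
  have cb: "c \<le> b" unfolding c_def using aS by (intro cSup_least) (auto simp: S_def)
  have below_c: "P y" if "a \<le> y" "y < c" for y
  proof -
    from \<open>y < c\<close> obtain x where "x \<in> S" "y < x"
      unfolding c_def using less_cSup_iff[of S y] aS bdd by auto
    then show ?thesis unfolding S_def using that by auto
  qed
  have "P c"
    using ac \<open>P a\<close> by (cases "a = c") (auto intro: left[OF _ cb] below_c)
  then have cS: "c \<in> S" unfolding S_def using ac cb below_c by (auto simp: order_le_less)
  have "c = b"
  proof (rule ccontr)
    assume "c \<noteq> b"
    with cb have "c < b" by simp
    from right[OF ac this] obtain z where "z > c" and z: "\<forall>y. c < y \<and> y \<le> z \<longrightarrow> P y"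
      using cS unfolding S_def by blast
    have "P y" if "a \<le> y" "y \<le> min b z" for y
      using that cS z unfolding S_def by (cases "y \<le> c") auto
    then have "min b z \<in> S"
      using \<open>z > c\<close> \<open>c < b\<close> ac unfolding S_def by auto
    then have "min b z \<le> c" unfolding c_def using bdd by (rule cSup_upper)
    then show False using \<open>z > c\<close> \<open>c < b\<close> by simp
  qed
  then show ?thesis using cS unfolding S_def by auto
qed

lemma le_by_right_dini_approx:
  fixes F :: "real \<Rightarrow> real"
  assumes "a \<le> b" and "e > 0"
    and left: "\<And>c e'. a < c \<Longrightarrow> c \<le> b \<Longrightarrow> e' > 0 \<Longrightarrow>
      \<forall>\<^sub>F x in at c within {a..<c}. F x \<le> F c + e'"
    and right: "\<And>c. a \<le> c \<Longrightarrow> c < b \<Longrightarrow>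
      \<forall>\<^sub>F y in at c within {c<..b}. F c - e * (y - c) \<le> F y"
  shows "F a - e * (b - a) \<le> F b"
proof (rule real_induction[OF \<open>a \<le> b\<close>, where P = "\<lambda>y. F a - e * (y - a) \<le> F y"])
  fix c assume c: "a < c" "c \<le> b" and below_c: "\<And>y. a \<le> y \<Longrightarrow> y < c \<Longrightarrow> F a - e * (y - a) \<le> F y"
  show "F a - e * (c - a) \<le> F c"
  proof (rule field_le_epsilon)
    fix e' :: real assume "e' > 0"
    from left[OF c this] obtain d where "d > 0"
      and d: "\<forall>x\<in>{a..<c}. x \<noteq> c \<and> dist x c < d \<longrightarrow> F x \<le> F c + e'"
      unfolding eventually_at by blast
    define x where "x = max a (c - d/2)"
    have x: "x \<in> {a..<c}" "dist x c < d"
      unfolding x_def dist_real_def using \<open>d > 0\<close> c by auto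
    have "e * (x - a) \<le> e * (c - a)"
      using x \<open>e > 0\<close> by (intro mult_left_mono) auto
    then show "F a - e * (c - a) \<le> F c + e'" using below_c[of x] d x by force
  qed
next
  fix c assume c: "a \<le> c" "c < b" and upto_c: "\<And>y. a \<le> y \<Longrightarrow> y \<le> c \<Longrightarrow> F a - e * (y - a) \<le> F y"
  from right[OF c] obtain d where "d > 0"
    and d: "\<forall>y\<in>{c<..b}. y \<noteq> c \<and> dist y c < d \<longrightarrow> F c - e * (y - c) \<le> F y"
    unfolding eventually_at by blast
  have "F a - e * (y - a) \<le> F y" if "c < y" "y \<le> min b (c + d/2)" for y
  proof -
    have "F c - e * (y - c) \<le> F y" using d that \<open>d > 0\<close> by (auto simp: dist_real_def)
    then show ?thesis using upto_c[of c] c by (simp add: algebra_simps)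
  qed
  then show "\<exists>z>c. \<forall>y. c < y \<and> y \<le> z \<longrightarrow> F a - e * (y - a) \<le> F y"
    using \<open>d > 0\<close> c by (intro exI[of _ "min b (c + d/2)"]) auto
qed simp

lemma le_by_right_dini:
  fixes F :: "real \<Rightarrow> real"
  assumes "a \<le> b"
    and left: "\<And>c e. a < c \<Longrightarrow> c \<le> b \<Longrightarrow> e > 0 \<Longrightarrow>
      \<forall>\<^sub>F x in at c within {a..<c}. F x \<le> F c + e"
    and right: "\<And>c e. a \<le> c \<Longrightarrow> c < b \<Longrightarrow> e > 0 \<Longrightarrow>
      \<forall>\<^sub>F y in at c within {c<..b}. F c - e * (y - c) \<le> F y"
  shows "F a \<le> F b"
proof (rule field_le_epsilon)
  fix e :: real assume "e > 0"
  have pos: "b - a + 1 > 0" using \<open>a \<le> b\<close> by simp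
  then have "F a - e / (b - a + 1) * (b - a) \<le> F b"
    using \<open>e > 0\<close> by (intro le_by_right_dini_approx assms) auto
  moreover have "e / (b - a + 1) * (b - a) \<le> e"
    using \<open>e > 0\<close> pos \<open>a \<le> b\<close> by (simp add: field_simps)
  ultimately show "F a \<le> F b + e" by linarith
qed

lemma eventually_at_within_subset:
  assumes "\<forall>\<^sub>F x in at c within T. P x" and "S \<subseteq> T"
  shows "\<forall>\<^sub>F x in at c within S. x \<in> S \<and> P x"
  using assms unfolding eventually_at_filter by (auto elim: eventually_mono)

section \<open>Polygonal length\<close>

fun chain_length :: "(real \<Rightarrow> 'a::real_normed_vector) \<Rightarrow> real list \<Rightarrow> real" where
  "chain_length g (x # y # s) = norm (g x - g y) + chain_length g (y # s)"
| "chain_length g _ = 0"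

lemma sum_eq_chain_length:
  "(\<Sum>i<length s - 1. norm (g (s ! i) - g (s ! Suc i))) = chain_length g s"
proof (induction g s rule: chain_length.induct)
  case (1 g x y s)
  have "(\<Sum>i<length (x # y # s) - 1. norm (g ((x # y # s) ! i) - g ((x # y # s) ! Suc i)))
     = norm (g x - g y) + (\<Sum>i<length (y # s) - 1. norm (g ((y # s) ! i) - g ((y # s) ! Suc i)))"
    by (simp add: sum.lessThan_Suc_shift del: sum.lessThan_Suc)
  then show ?case using 1 by simp
qed auto

lemma chain_length_nonneg: "chain_length g s \<ge> 0"
  by (induction g s rule: chain_length.induct) auto

lemma chain_length_const: "\<forall>x\<in>set s. x = c \<Longrightarrow> chain_length g s = 0"
  by (induction g s rule: chain_length.induct) auto

lemma chain_length_append: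
  "chain_length g (A @ q # B) = chain_length g (A @ [q]) + chain_length g (q # B)"
proof (induction A)
  case (Cons x A)
  then show ?case by (cases A) auto
qed simp

lemma chain_length_append_le:
  "chain_length g (A @ B) \<le> chain_length g (A @ [q]) + chain_length g (q # B)"
proof (induction A)
  case Nil
  then show ?case by (cases B) (auto simp: chain_length_nonneg)
next
  case (Cons x A)
  show ?case
  proof (cases A)
    case Nil
    then show ?thesis
      using norm_triangle_ineq[of "g x - g q" "g q - g (hd B)"] by (cases B) auto
  next
    case (Cons z A')
    then show ?thesis using Cons.IH by simp
  qed
qed

lemma chain_length_snoc_le: "chain_length g s \<le> chain_length g (s @ [x])"
  by (induction g s rule: chain_length.induct) auto

lemma chain_length_le_telescope:
  assumes "sorted s" "s \<noteq> []"
    and "\<And>x y. x \<in> set s \<Longrightarrow> y \<in> set s \<Longrightarrow> x \<le> y \<Longrightarrow> norm (g y - g x) \<le> G y - G x"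
  shows "chain_length g s \<le> G (last s) - G (hd s)"
  using assms
proof (induction g s rule: chain_length.induct)
  case (1 g x y s)
  have "chain_length g (y # s) \<le> G (last (y # s)) - G y" using 1 by auto
  moreover have "norm (g y - g x) \<le> G y - G x" using 1 by auto
  ultimately show ?case by (simp add: norm_minus_commute)
qed auto

lemma sorted_wrt_less_split:
  fixes s :: "real list"
  assumes "sorted_wrt (<) s"
  obtains A B where "s = A @ B" "\<forall>x\<in>set A. x < c" "\<forall>x\<in>set B. c \<le> x"
proof
  show "s = takeWhile (\<lambda>x. x < c) s @ dropWhile (\<lambda>x. x < c) s" by simp
  show "\<forall>x\<in>set (takeWhile (\<lambda>x. x < c) s). x < c" by (auto dest: set_takeWhileD)
  show "\<forall>x\<in>set (dropWhile (\<lambda>x. x < c) s). c \<le> x" using assms by (induction s) auto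
qed

lemma curve_length_chain_length:
  "curve_length g a b = (SUP s \<in> {s. sorted_wrt (<) s \<and> set s \<subseteq> {a..b}}. ereal (chain_length g s))"
  unfolding curve_length_def sum_eq_chain_length ..

lemma curve_length_nonneg: "curve_length g a b \<ge> 0"
  unfolding curve_length_chain_length by (rule SUP_upper2[of "[]"]) auto

lemma curve_length_mono: "b \<le> b' \<Longrightarrow> curve_length g a b \<le> curve_length g a b'"
  unfolding curve_length_chain_length by (rule SUP_subset_mono) auto

lemma chain_length_le_curve_length:
  "sorted_wrt (<) s \<Longrightarrow> set s \<subseteq> {a..b} \<Longrightarrow> ereal (chain_length g s) \<le> curve_length g a b"
  unfolding curve_length_chain_length by (rule SUP_upper) auto

lemma curve_length_le:
  "(\<And>s. sorted_wrt (<) s \<Longrightarrow> set s \<subseteq> {a..b} \<Longrightarrow> chain_length g s \<le> B) \<Longrightarrow>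
    curve_length g a b \<le> ereal B"
  unfolding curve_length_chain_length by (rule SUP_least) auto

lemma curve_length_refl: "curve_length g a a = 0"
proof -
  have "curve_length g a a \<le> ereal 0"
    by (rule curve_length_le) (auto intro: chain_length_const[THEN eq_refl])
  then show ?thesis using curve_length_nonneg[of g a a] by (simp add: zero_ereal_def)
qed

lemma curve_length_add_dist:
  assumes "a \<le> c" "c \<le> y"
  shows "curve_length g a c + ereal (norm (g y - g c)) \<le> curve_length g a y"
proof (cases "c = y")
  case False
  with assms have "c < y" by simp
  show ?thesis
  proof (cases "curve_length g a y")
    case (real R)
    have "curve_length g a c \<le> ereal (R - norm (g y - g c))"
    proof (rule curve_length_le)
      fix s assume s: "sorted_wrt (<) s" "set s \<subseteq> {a..c}"
      obtain A B where AB: "s = A @ B" "\<forall>x\<in>set A. x < c" "\<forall>x\<in>set B. c \<le> x"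
        using sorted_wrt_less_split[OF s(1)] .
      have "chain_length g s \<le> chain_length g (A @ [c]) + chain_length g (c # B)"
        unfolding AB(1) by (rule chain_length_append_le)
      also have "chain_length g (c # B) = 0"
        using s(2) AB by (intro chain_length_const) fastforce
      also have "chain_length g (A @ [c]) = chain_length g (A @ [c, y]) - norm (g y - g c)"
        using chain_length_append[of g A c "[y]"] by (simp add: norm_minus_commute)
      also have "chain_length g (A @ [c, y]) \<le> R"
      proof -
        have "sorted_wrt (<) (A @ [c, y])" "set (A @ [c, y]) \<subseteq> {a..y}"
          using s AB assms \<open>c < y\<close> by (auto simp: sorted_wrt_append subset_iff less_imp_le)
        from chain_length_le_curve_length[where g = g, OF this] show ?thesis using real by simp
      qed
      finally show "chain_length g s \<le> R - norm (g y - g c)" by simp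
    qed
    then show ?thesis using real by (cases "curve_length g a c") auto
  qed (use curve_length_nonneg[of g a y] in auto)
qed simp

lemma curve_length_le_increment:
  assumes "t1 \<le> a" "a \<le> b"
    and G: "\<And>x y. a \<le> x \<Longrightarrow> x \<le> y \<Longrightarrow> y \<le> b \<Longrightarrow> norm (g y - g x) \<le> G y - G x"
  shows "curve_length g t1 b \<le> curve_length g t1 a + ereal (G b - G a)"
proof (cases "curve_length g t1 a")
  case (real La)
  have "curve_length g t1 b \<le> ereal (La + (G b - G a))"
  proof (rule curve_length_le)
    fix s assume s: "sorted_wrt (<) s" "set s \<subseteq> {t1..b}"
    obtain A B where AB: "s = A @ B" "\<forall>x\<in>set A. x < a" "\<forall>x\<in>set B. a \<le> x"
      using sorted_wrt_less_split[OF s(1)] .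
    have "chain_length g s \<le> chain_length g (A @ [a]) + chain_length g (a # B)"
      unfolding AB(1) by (rule chain_length_append_le)
    also have "chain_length g (A @ [a]) \<le> La"
    proof -
      have "sorted_wrt (<) (A @ [a])" "set (A @ [a]) \<subseteq> {t1..a}"
        using s AB assms by (auto simp: sorted_wrt_append subset_iff less_imp_le)
      from chain_length_le_curve_length[where g = g, OF this] show ?thesis using real by simp
    qed
    also have "chain_length g (a # B) \<le> chain_length g ((a # B) @ [b])"
      by (rule chain_length_snoc_le)
    also have "\<dots> \<le> G b - G a"
    proof -
      have "sorted B" using s(1) AB(1) by (simp add: sorted_wrt_append strict_sorted_imp_sorted)
      moreover have inside: "set ((a # B) @ [b]) \<subseteq> {a..b}" using s(2) AB assms by auto
      ultimately have "sorted ((a # B) @ [b])" by (auto simp: sorted_append subset_iff)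
      moreover have "norm (g y - g x) \<le> G y - G x"
        if "x \<in> set ((a # B) @ [b])" "y \<in> set ((a # B) @ [b])" "x \<le> y" for x y
        using that inside by (intro G) auto
      ultimately have "chain_length g ((a # B) @ [b]) \<le> G (last ((a # B) @ [b])) - G (hd ((a # B) @ [b]))"
        by (intro chain_length_le_telescope) auto
      then show ?thesis by simp
    qed
    finally show "chain_length g s \<le> La + (G b - G a)" by simp
  qed
  then show ?thesis using real by simp
qed (use curve_length_nonneg[of g t1 a] in auto)
section \<open>The infinitesimal eel inequality\<close>

lemma dist_after_eel_step:
  fixes p q v r :: "'a::real_inner"
  assumes eel: "inner v (p - q) \<le> lam * norm v * norm (p - q)"
    and lam: "-1 \<le> lam" "lam \<le> 1" and "0 \<le> h"
  shows "norm (p - q) - 2 * norm r \<le> norm (p - (q + h *\<^sub>R v + r)) + lam * norm (h *\<^sub>R v + r)"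
proof -
  have step: "norm (p - q) - lam * (h * norm v) - norm r \<le> norm (p - (q + h *\<^sub>R v + r))"
  proof (cases "p = q")
    case True
    have "- lam * (h * norm v) \<le> h * norm v"
      using lam \<open>0 \<le> h\<close> mult_right_mono[of "- lam" 1 "h * norm v"] by simp
    moreover have "h * norm v - norm r \<le> norm (h *\<^sub>R v + r)"
      using norm_triangle_ineq4[of "h *\<^sub>R v + r" r] \<open>0 \<le> h\<close> by simp
    moreover have "p - (q + h *\<^sub>R v + r) = - (h *\<^sub>R v + r)" using True by simp
    then have "norm (p - (q + h *\<^sub>R v + r)) = norm (h *\<^sub>R v + r)" by (metis norm_minus_cancel)
    moreover have "norm (p - q) = 0" using True by simp
    ultimately show ?thesis by linarith
  next
    case False
    define w where "w = q - p"
    have nw: "norm w > 0" using False unfolding w_def by simp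
    have "h * (- lam * norm v * norm w) \<le> h * inner v w"
      using eel \<open>0 \<le> h\<close> unfolding w_def
      by (intro mult_left_mono) (auto simp: norm_minus_commute inner_diff_right)
    moreover have "- (norm r * norm w) \<le> inner r w"
      using norm_cauchy_schwarz[of "- r" w] by simp
    moreover have "inner (q + h *\<^sub>R v + r - p) w = norm w * norm w + h * inner v w + inner r w"
    proof -
      have eq: "q + h *\<^sub>R v + r - p = w + h *\<^sub>R v + r" unfolding w_def by (simp add: algebra_simps)
      show ?thesis unfolding eq by (simp add: inner_add_left dot_square_norm power2_eq_square)
    qed
    moreover have "inner (q + h *\<^sub>R v + r - p) w \<le> norm (q + h *\<^sub>R v + r - p) * norm w"
      by (rule norm_cauchy_schwarz)
    ultimately have "norm w * (norm w - lam * (h * norm v) - norm r)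
        \<le> norm w * norm (q + h *\<^sub>R v + r - p)"
      by (simp add: algebra_simps)
    then show ?thesis
      using nw unfolding w_def by (simp add: mult_le_cancel_left_pos norm_minus_commute)
  qed
  have "\<bar>norm (h *\<^sub>R v + r) - h * norm v\<bar> \<le> norm r"
    using norm_triangle_ineq3[of "h *\<^sub>R v + r" "h *\<^sub>R v"] \<open>0 \<le> h\<close> by simp
  moreover have "\<bar>lam\<bar> * \<bar>norm (h *\<^sub>R v + r) - h * norm v\<bar> \<le> \<bar>norm (h *\<^sub>R v + r) - h * norm v\<bar>"
    using lam by (intro mult_left_le_one_le) auto
  ultimately have "\<bar>lam * (norm (h *\<^sub>R v + r) - h * norm v)\<bar> \<le> norm r"
    by (simp add: abs_mult)
  then show ?thesis using step by (simp add: algebra_simps abs_le_iff)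
qed

lemma eel_right_dini:
  fixes g :: "real \<Rightarrow> 'a::real_inner"
  assumes eel: "is_eel lam I g" and lam: "-1 \<le> lam" "lam \<le> 1"
    and "t1 \<in> I" "c \<in> I" "t1 \<le> c" "e > 0"
  shows "\<forall>\<^sub>F y in at c within I \<inter> {c<..}.
    norm (g t1 - g c) - e * (y - c) \<le> norm (g t1 - g y) + lam * norm (g y - g c)"
proof -
  obtain v where der: "(g has_vector_derivative v) (at c within I \<inter> {c..})"
    and cond: "inner v (g t1 - g c) \<le> lam * norm v * norm (g t1 - g c)"
  proof -
    from eel \<open>c \<in> I\<close> obtain v where "(g has_vector_derivative v) (at c within I \<inter> {c..})"
      and "\<forall>t\<in>I. t < c \<longrightarrow> inner v (g t - g c) \<le> lam * norm v * norm (g t - g c)"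
      unfolding is_eel_def by blast
    with that \<open>t1 \<in> I\<close> \<open>t1 \<le> c\<close> show ?thesis by (cases "t1 = c") auto
  qed
  from der obtain d where "d > 0" and d: "\<forall>y\<in>I \<inter> {c..}. norm (y - c) < d \<longrightarrow>
      norm (g y - g c - (y - c) *\<^sub>R v) \<le> e / 2 * norm (y - c)"
    using \<open>e > 0\<close> unfolding has_vector_derivative_def has_derivative_within_alt
    by (metis half_gt_zero)
  show ?thesis
    unfolding eventually_at
  proof (intro exI[of _ d] conjI ballI impI \<open>d > 0\<close>)
    fix y assume y: "y \<in> I \<inter> {c<..}" "y \<noteq> c \<and> dist y c < d"
    define r where "r = g y - g c - (y - c) *\<^sub>R v"
    have "norm r \<le> e / 2 * (y - c)" using d y unfolding r_def by (auto simp: dist_real_def)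
    moreover have "norm (g t1 - g c) - 2 * norm r
        \<le> norm (g t1 - (g c + (y - c) *\<^sub>R v + r)) + lam * norm ((y - c) *\<^sub>R v + r)"
      using y by (intro dist_after_eel_step cond lam) auto
    ultimately show "norm (g t1 - g c) - e * (y - c) \<le> norm (g t1 - g y) + lam * norm (g y - g c)"
      unfolding r_def by simp
  qed
qed

lemma eel_interval_mem:
  "is_eel lam I g \<Longrightarrow> a \<in> I \<Longrightarrow> b \<in> I \<Longrightarrow> a \<le> x \<Longrightarrow> x \<le> b \<Longrightarrow> x \<in> I"
  unfolding is_eel_def by (blast intro: mem_is_interval_1_I)

section \<open>Monotonicity for \<open>\<lambda> \<le> 0\<close>\<close>

lemma eel_chord:
  fixes g :: "real \<Rightarrow> 'a::real_inner"
  assumes eel: "is_eel lam I g" and lam: "-1 \<le> lam" "lam \<le> 0"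
    and "t1 \<in> I" "b \<in> I" "t1 \<le> a" "a \<le> b"
  shows "norm (g t1 - g a) \<le> norm (g t1 - g b) + lam * norm (g b - g a)"
proof -
  have inI: "x \<in> I" if "t1 \<le> x" "x \<le> b" for x
    using eel_interval_mem[OF eel \<open>t1 \<in> I\<close> \<open>b \<in> I\<close> that] .
  define \<Phi> where "\<Phi> \<tau> = norm (g t1 - g \<tau>) + lam * norm (g \<tau> - g a)" for \<tau>
  have "\<Phi> a \<le> \<Phi> b"
  proof (rule le_by_right_dini[OF \<open>a \<le> b\<close>])
    fix c e :: real assume c: "a < c" "c \<le> b" and "e > 0"
    from eel have "continuous_on I \<Phi>"
      unfolding \<Phi>_def is_eel_def by (auto intro!: continuous_intros)
    then have "(\<Phi> \<longlongrightarrow> \<Phi> c) (at c within I)"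
      using inI c \<open>t1 \<le> a\<close> by (auto simp: continuous_on_def)
    then have "\<forall>\<^sub>F x in at c within I. dist (\<Phi> x) (\<Phi> c) < e"
      using \<open>e > 0\<close> by (rule tendstoD)
    then show "\<forall>\<^sub>F x in at c within {a..<c}. \<Phi> x \<le> \<Phi> c + e"
      by (rule eventually_mono[OF eventually_at_within_subset])
        (use inI c \<open>t1 \<le> a\<close> in \<open>auto simp: dist_real_def\<close>)
  next
    fix c e :: real assume c: "a \<le> c" "c < b" and "e > 0"
    have "\<forall>\<^sub>F y in at c within I \<inter> {c<..}.
        norm (g t1 - g c) - e * (y - c) \<le> norm (g t1 - g y) + lam * norm (g y - g c)"
      using inI c \<open>t1 \<le> a\<close> \<open>e > 0\<close> lam by (intro eel_right_dini eel \<open>t1 \<in> I\<close>) auto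
    then have "\<forall>\<^sub>F y in at c within {c<..b}. y \<in> {c<..b} \<and>
        norm (g t1 - g c) - e * (y - c) \<le> norm (g t1 - g y) + lam * norm (g y - g c)"
      by (rule eventually_at_within_subset) (use inI c \<open>t1 \<le> a\<close> in auto)
    then show "\<forall>\<^sub>F y in at c within {c<..b}. \<Phi> c - e * (y - c) \<le> \<Phi> y"
    proof (rule eventually_mono)
      fix y
      have "lam * (norm (g y - g c) + norm (g c - g a)) \<le> lam * norm (g y - g a)"
        using lam norm_triangle_ineq[of "g y - g c" "g c - g a"]
        by (intro mult_left_mono_neg) auto
      then show "y \<in> {c<..b} \<and>
          norm (g t1 - g c) - e * (y - c) \<le> norm (g t1 - g y) + lam * norm (g y - g c)
          \<Longrightarrow> \<Phi> c - e * (y - c) \<le> \<Phi> y"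
        unfolding \<Phi>_def by (simp add: algebra_simps)
    qed
  qed
  then show ?thesis by (simp add: \<Phi>_def norm_minus_commute)
qed

lemma eel_length_mono_neg:
  fixes g :: "real \<Rightarrow> 'a::real_inner"
  assumes eel: "is_eel lam I g" and lam: "-1 \<le> lam" "lam < 0"
    and "t1 \<in> I" "b \<in> I" "t1 \<le> a" "a \<le> b"
  shows "ereal (norm (g t1 - g a)) + ereal lam * curve_length g t1 a
    \<le> ereal (norm (g t1 - g b)) + ereal lam * curve_length g t1 b"
proof -
  define G where "G \<tau> = norm (g t1 - g \<tau>) / - lam" for \<tau>
  have G: "norm (g y - g x) \<le> G y - G x" if "t1 \<le> x" "x \<le> y" "y \<le> b" for x y
  proof -
    have "y \<in> I" using eel_interval_mem[OF eel \<open>t1 \<in> I\<close> \<open>b \<in> I\<close>] that by auto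
    then have "- lam * norm (g y - g x) \<le> norm (g t1 - g y) - norm (g t1 - g x)"
      using eel_chord[OF eel lam(1) _ \<open>t1 \<in> I\<close> _ that(1,2)] lam by simp
    then have "(- lam * norm (g y - g x)) / - lam \<le> (norm (g t1 - g y) - norm (g t1 - g x)) / - lam"
      using lam by (intro divide_right_mono) auto
    then show ?thesis using lam by (simp add: G_def diff_divide_distrib)
  qed
  have "curve_length g t1 a \<le> curve_length g t1 t1 + ereal (G a - G t1)"
    by (rule curve_length_le_increment) (use G \<open>t1 \<le> a\<close> \<open>a \<le> b\<close> in auto)
  then obtain A where A: "curve_length g t1 a = ereal A"
    using curve_length_nonneg[of g t1 a] by (cases "curve_length g t1 a") (auto simp: curve_length_refl)
  have "curve_length g t1 b \<le> curve_length g t1 a + ereal (G b - G a)"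
    by (rule curve_length_le_increment) (use G \<open>t1 \<le> a\<close> \<open>a \<le> b\<close> in auto)
  then obtain B where B: "curve_length g t1 b = ereal B" and "B \<le> A + (G b - G a)"
    using A curve_length_nonneg[of g t1 b] by (cases "curve_length g t1 b") auto
  then have "lam * (A + (G b - G a)) \<le> lam * B"
    using lam by (intro mult_left_mono_neg) auto
  moreover have "lam * (G b - G a) = norm (g t1 - g a) - norm (g t1 - g b)"
    unfolding G_def using lam by (simp add: field_simps)
  ultimately have "norm (g t1 - g a) + lam * A \<le> norm (g t1 - g b) + lam * B"
    by (simp add: algebra_simps)
  then show ?thesis using A B by simp
qed

section \<open>Monotonicity for \<open>\<lambda> > 0\<close>\<close>

lemma eel_mono_superadditive:
  fixes g :: "real \<Rightarrow> 'a::real_inner" and L :: "real \<Rightarrow> real"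
  assumes eel: "is_eel lam I g" and lam: "0 \<le> lam" "lam \<le> 1"
    and "t1 \<in> I" "b \<in> I" "t1 \<le> a" "a \<le> b"
    and L: "\<And>c y. a \<le> c \<Longrightarrow> c \<le> y \<Longrightarrow> y \<le> b \<Longrightarrow> L c + norm (g y - g c) \<le> L y"
  shows "norm (g t1 - g a) + lam * L a \<le> norm (g t1 - g b) + lam * L b"
proof -
  have inI: "x \<in> I" if "t1 \<le> x" "x \<le> b" for x
    using eel_interval_mem[OF eel \<open>t1 \<in> I\<close> \<open>b \<in> I\<close> that] .
  show ?thesis
  proof (rule le_by_right_dini[OF \<open>a \<le> b\<close>])
    fix c e :: real assume c: "a < c" "c \<le> b" and "e > 0"
    from eel have "(g \<longlongrightarrow> g c) (at c within I)"
      using inI c \<open>t1 \<le> a\<close> by (auto simp: is_eel_def continuous_on_def)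
    then have "\<forall>\<^sub>F x in at c within I. dist (g x) (g c) < e"
      using \<open>e > 0\<close> by (rule tendstoD)
    then have "\<forall>\<^sub>F x in at c within {a..<c}. x \<in> {a..<c} \<and> dist (g x) (g c) < e"
      by (rule eventually_at_within_subset) (use inI c \<open>t1 \<le> a\<close> in auto)
    then show "\<forall>\<^sub>F x in at c within {a..<c}.
        norm (g t1 - g x) + lam * L x \<le> norm (g t1 - g c) + lam * L c + e"
    proof (rule eventually_mono)
      fix x assume "x \<in> {a..<c} \<and> dist (g x) (g c) < e"
      then have x: "a \<le> x" "x < c" "dist (g x) (g c) < e" by auto
      have "lam * (L x + norm (g c - g x)) \<le> lam * L c"
        using L x c lam by (intro mult_left_mono) auto
      moreover have "0 \<le> lam * norm (g c - g x)" using lam by simp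
      moreover have "norm (g t1 - g x) \<le> norm (g t1 - g c) + norm (g c - g x)"
        using norm_triangle_ineq[of "g t1 - g c" "g c - g x"] by simp
      moreover have "norm (g c - g x) < e" using x(3) by (simp add: dist_norm norm_minus_commute)
      ultimately show "norm (g t1 - g x) + lam * L x \<le> norm (g t1 - g c) + lam * L c + e"
        by (simp add: algebra_simps)
    qed
  next
    fix c e :: real assume c: "a \<le> c" "c < b" and "e > 0"
    have "\<forall>\<^sub>F y in at c within I \<inter> {c<..}.
        norm (g t1 - g c) - e * (y - c) \<le> norm (g t1 - g y) + lam * norm (g y - g c)"
      using inI c \<open>t1 \<le> a\<close> \<open>e > 0\<close> lam by (intro eel_right_dini eel \<open>t1 \<in> I\<close>) auto
    then have "\<forall>\<^sub>F y in at c within {c<..b}. y \<in> {c<..b} \<and>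
        norm (g t1 - g c) - e * (y - c) \<le> norm (g t1 - g y) + lam * norm (g y - g c)"
      by (rule eventually_at_within_subset) (use inI c \<open>t1 \<le> a\<close> in auto)
    then show "\<forall>\<^sub>F y in at c within {c<..b}.
        norm (g t1 - g c) + lam * L c - e * (y - c) \<le> norm (g t1 - g y) + lam * L y"
    proof (rule eventually_mono)
      fix y assume "y \<in> {c<..b} \<and>
        norm (g t1 - g c) - e * (y - c) \<le> norm (g t1 - g y) + lam * norm (g y - g c)"
      then have y: "c < y" "y \<le> b"
        "norm (g t1 - g c) - e * (y - c) \<le> norm (g t1 - g y) + lam * norm (g y - g c)" by auto
      have "lam * (L c + norm (g y - g c)) \<le> lam * L y"
        using L y c lam by (intro mult_left_mono) auto
      then show "norm (g t1 - g c) + lam * L c - e * (y - c) \<le> norm (g t1 - g y) + lam * L y"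
        using y(3) by (simp add: algebra_simps)
    qed
  qed
qed

lemma eel_length_mono_pos:
  fixes g :: "real \<Rightarrow> 'a::real_inner"
  assumes eel: "is_eel lam I g" and lam: "0 < lam" "lam \<le> 1"
    and "t1 \<in> I" "b \<in> I" "t1 \<le> a" "a \<le> b"
  shows "ereal (norm (g t1 - g a)) + ereal lam * curve_length g t1 a
    \<le> ereal (norm (g t1 - g b)) + ereal lam * curve_length g t1 b"
proof (cases "curve_length g t1 b = \<infinity>")
  case False
  define L where "L \<tau> = real_of_ereal (curve_length g t1 \<tau>)" for \<tau>
  have fin: "curve_length g t1 \<tau> = ereal (L \<tau>)" if "\<tau> \<le> b" for \<tau>
    using curve_length_mono[OF that, of g t1] False curve_length_nonneg[of g t1 \<tau>]
    unfolding L_def by (cases "curve_length g t1 \<tau>") auto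
  have "L c + norm (g y - g c) \<le> L y" if "a \<le> c" "c \<le> y" "y \<le> b" for c y
    using curve_length_add_dist[of t1 c y g] fin[of c] fin[of y] that \<open>t1 \<le> a\<close> by simp
  with eel_mono_superadditive[OF eel lam(1)[THEN less_imp_le] lam(2) assms(4-7)]
  have "norm (g t1 - g a) + lam * L a \<le> norm (g t1 - g b) + lam * L b" by blast
  then show ?thesis using fin[of a] fin[of b] \<open>a \<le> b\<close> by simp
qed (use lam in simp)

theorem lemma4p1:
  fixes \<gamma> :: "real \<Rightarrow> 'a::euclidean_space" and lam :: real and I :: "real set"
  assumes "-1 \<le> lam" and "lam < 1"
    and "is_eel lam I \<gamma>"
    and "t1 \<in> I"
  shows "mono_on (I \<inter> {t1..})
           (\<lambda>t. ereal (norm (\<gamma> t1 - \<gamma> t)) + ereal lam * curve_length \<gamma> t1 t)"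
proof (rule mono_onI)
  fix a b assume "a \<in> I \<inter> {t1..}" "b \<in> I \<inter> {t1..}" "a \<le> b"
  then have ab: "b \<in> I" "t1 \<le> a" "a \<le> b" by auto
  consider "lam < 0" | "lam = 0" | "0 < lam" by linarith
  then show "ereal (norm (\<gamma> t1 - \<gamma> a)) + ereal lam * curve_length \<gamma> t1 a
      \<le> ereal (norm (\<gamma> t1 - \<gamma> b)) + ereal lam * curve_length \<gamma> t1 b"
  proof cases
    case 1
    then show ?thesis using eel_length_mono_neg assms ab by blast
  next
    case 2
    then show ?thesis
      using eel_chord[OF assms(3) assms(1) _ assms(4) ab] by (simp flip: zero_ereal_def)
  next
    case 3
    then show ?thesis using eel_length_mono_pos assms ab by (meson less_imp_le)
  qed
qed

end
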